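(* In $\mathsf{RT}(\mathcal{K}_2)$, every intrinsically discrete space is countable: for any object $X$, the topos validates "if the equality relation on $X$ is intrinsically open, then $X$ is countable".
   Context: $\mathsf{RT}(\mathcal{K}_2)$ is the function realizability topos (realizability topos over Kleene's second partial combinatory algebra $\mathcal{K}_2$), with intuitionistic internal language; $\Omega$ is its object of truth values. The Rosolini dominance is $\Sigma = \{p \in \Omega \mid \exists \alpha \in \{0,1\}^{\mathbb{N}}.\, p \Leftrightarrow \exists n\in\mathbb{N}.\, \alpha_n = 1\}$. A subobject is intrinsically open if its characteristic map to $\Omega$ factors through $\Sigma \rightarrowtail \Omega$; $X$ is intrinsically discrete if the equality relation $\{(x,y) \mid x = y\} \subseteq X\times X$ is intrinsically open (equivalently, every singleton is open). A set $X$ is countable if there is a surjection $\mathbb{N} \to X + 1$. *)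

theory Defs
  imports Main "HOL-Library.Countable"
begin

text \<open>Realizability semantics of the function realizability topos RT(K2),
  written out via the standard tripos construction over Kleene's second
  partial combinatory algebra K2 (Baire space with continuous application).\<close>

type_synonym baire = "nat \<Rightarrow> nat"
type_synonym rset = "baire set"

definition K2_code :: "nat list \<Rightarrow> nat" where
  "K2_code = to_nat"

definition K2_defined_at :: "baire \<Rightarrow> baire \<Rightarrow> nat \<Rightarrow> bool" where
  "K2_defined_at f a n \<longleftrightarrow> (\<exists>k. f (K2_code (n # map a [0..<k])) > 0)"

definition K2_app :: "baire \<Rightarrow> baire \<Rightarrow> baire option" where
  "K2_app f a =
     (if \<forall>n. K2_defined_at f a n
      then Some (\<lambda>n. f (K2_code (n # map a [0..<(LEAST k. f (K2_code (n # map a [0..<k])) > 0)])) - 1)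
      else None)"

definition rpair :: "baire \<Rightarrow> baire \<Rightarrow> baire" where
  "rpair a b = (\<lambda>n. if even n then a (n div 2) else b (n div 2))"

definition r_conj :: "rset \<Rightarrow> rset \<Rightarrow> rset" where
  "r_conj P Q = {rpair a b | a b. a \<in> P \<and> b \<in> Q}"

definition r_disj :: "rset \<Rightarrow> rset \<Rightarrow> rset" where
  "r_disj P Q = {rpair t a | t a. (t = (\<lambda>_. 0) \<and> a \<in> P) \<or> (t = (\<lambda>_. 1) \<and> a \<in> Q)}"

definition r_imp :: "rset \<Rightarrow> rset \<Rightarrow> rset" where
  "r_imp P Q = {r. \<forall>a\<in>P. \<exists>b\<in>Q. K2_app r a = Some b}"

definition r_iff :: "rset \<Rightarrow> rset \<Rightarrow> rset" where
  "r_iff P Q = r_conj (r_imp P Q) (r_imp Q P)"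

definition r_all :: "('x \<Rightarrow> rset) \<Rightarrow> rset" where
  "r_all \<Phi> = (\<Inter>x. \<Phi> x)"

definition r_ex :: "('x \<Rightarrow> rset) \<Rightarrow> rset" where
  "r_ex \<Phi> = (\<Union>x. \<Phi> x)"

text \<open>An object of the topos is a carrier (a type) with a realizability-valued
  equality E; quantifiers over an object are relativised to existence E x x.\<close>

definition all_in :: "('x \<Rightarrow> 'x \<Rightarrow> rset) \<Rightarrow> ('x \<Rightarrow> rset) \<Rightarrow> rset" where
  "all_in E \<Phi> = r_all (\<lambda>x. r_imp (E x x) (\<Phi> x))"

definition ex_in :: "('x \<Rightarrow> 'x \<Rightarrow> rset) \<Rightarrow> ('x \<Rightarrow> rset) \<Rightarrow> rset" where
  "ex_in E \<Phi> = r_ex (\<lambda>x. r_conj (E x x) (\<Phi> x))"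

definition is_object :: "('x \<Rightarrow> 'x \<Rightarrow> rset) \<Rightarrow> bool" where
  "is_object E \<longleftrightarrow>
     r_all (\<lambda>x. r_all (\<lambda>y. r_imp (E x y) (E y x))) \<noteq> {} \<and>
     r_all (\<lambda>x. r_all (\<lambda>y. r_all (\<lambda>z. r_imp (r_conj (E x y) (E y z)) (E x z)))) \<noteq> {}"

definition nno_eq :: "nat \<Rightarrow> nat \<Rightarrow> rset" where
  "nno_eq n m = (if n = m then {\<lambda>_. n} else {})"

text \<open>Coproduct X + 1 (None is the added point).\<close>
fun sum_one_eq :: "('x \<Rightarrow> 'x \<Rightarrow> rset) \<Rightarrow> 'x option \<Rightarrow> 'x option \<Rightarrow> rset" where
  "sum_one_eq E (Some x) (Some y) = {rpair (\<lambda>_. 0) r | r. r \<in> E x y}"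
| "sum_one_eq E None None = {rpair (\<lambda>_. 1) r | r. True}"
| "sum_one_eq E _ _ = {}"

definition prod_eq :: "('x \<Rightarrow> 'x \<Rightarrow> rset) \<Rightarrow> ('y \<Rightarrow> 'y \<Rightarrow> rset) \<Rightarrow> 'x \<times> 'y \<Rightarrow> 'x \<times> 'y \<Rightarrow> rset" where
  "prod_eq E1 E2 p q = r_conj (E1 (fst p) (fst q)) (E2 (snd p) (snd q))"

text \<open>Power object: strict extensional predicates.\<close>
definition strict_pred :: "('x \<Rightarrow> 'x \<Rightarrow> rset) \<Rightarrow> ('x \<Rightarrow> rset) \<Rightarrow> rset" where
  "strict_pred E \<phi> = r_all (\<lambda>x. r_imp (\<phi> x) (E x x))"

definition ext_pred :: "('x \<Rightarrow> 'x \<Rightarrow> rset) \<Rightarrow> ('x \<Rightarrow> rset) \<Rightarrow> rset" where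
  "ext_pred E \<phi> = r_all (\<lambda>x. r_all (\<lambda>y. r_imp (r_conj (\<phi> x) (E x y)) (\<phi> y)))"

definition pow_eq :: "('x \<Rightarrow> 'x \<Rightarrow> rset) \<Rightarrow> ('x \<Rightarrow> rset) \<Rightarrow> ('x \<Rightarrow> rset) \<Rightarrow> rset" where
  "pow_eq E \<phi> \<psi> = r_conj (r_conj (strict_pred E \<phi>) (ext_pred E \<phi>)) (r_all (\<lambda>x. r_iff (\<phi> x) (\<psi> x)))"

definition is_fun_rel :: "('x \<Rightarrow> 'x \<Rightarrow> rset) \<Rightarrow> ('y \<Rightarrow> 'y \<Rightarrow> rset) \<Rightarrow> ('x \<times> 'y \<Rightarrow> rset) \<Rightarrow> rset" where
  "is_fun_rel EA EB F =
     r_conj (all_in EA (\<lambda>a. ex_in EB (\<lambda>b. F (a, b))))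
            (all_in EA (\<lambda>a. all_in EB (\<lambda>b. all_in EB (\<lambda>b'.
                r_imp (r_conj (F (a, b)) (F (a, b'))) (EB b b')))))"

definition is_surj_rel :: "('x \<Rightarrow> 'x \<Rightarrow> rset) \<Rightarrow> ('y \<Rightarrow> 'y \<Rightarrow> rset) \<Rightarrow> ('x \<times> 'y \<Rightarrow> rset) \<Rightarrow> rset" where
  "is_surj_rel EA EB F = all_in EB (\<lambda>b. ex_in EA (\<lambda>a. F (a, b)))"

definition is_binseq :: "(nat \<times> nat \<Rightarrow> rset) \<Rightarrow> rset" where
  "is_binseq G = r_conj (is_fun_rel nno_eq nno_eq G)
     (all_in nno_eq (\<lambda>n. all_in nno_eq (\<lambda>m.
        r_imp (G (n, m)) (r_disj (nno_eq m 0) (nno_eq m 1)))))"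

text \<open>"The equality on X is intrinsically open":
  forall x y in X. [x = y] \<in> \<Sigma>, i.e. exists alpha in {0,1}^N with
  (x = y) <-> (exists n. alpha_n = 1).\<close>
definition eq_intrinsically_open :: "('x \<Rightarrow> 'x \<Rightarrow> rset) \<Rightarrow> rset" where
  "eq_intrinsically_open E =
     all_in E (\<lambda>x. all_in E (\<lambda>y.
       ex_in (pow_eq (prod_eq nno_eq nno_eq)) (\<lambda>G.
         r_conj (is_binseq G) (r_iff (E x y) (ex_in nno_eq (\<lambda>n. G (n, 1)))))))"

text \<open>"X is countable": there is a surjection N \<rightarrow> X + 1.\<close>
definition countable_obj :: "('x \<Rightarrow> 'x \<Rightarrow> rset) \<Rightarrow> rset" where
  "countable_obj E =
     ex_in (pow_eq (prod_eq nno_eq (sum_one_eq E))) (\<lambda>F.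
       r_conj (is_fun_rel nno_eq (sum_one_eq E) F) (is_surj_rel nno_eq (sum_one_eq E) F))"

definition valid :: "rset \<Rightarrow> bool" where
  "valid P \<longleftrightarrow> P \<noteq> {}"

end

theory Submission
  imports Defs
begin

(* A realizer of the openness of equality turns realizers r of x = x and s of y = y into a
   binary sequence G(r, s) with x = y iff G(r, s) hits 1, together with realizers of both
   directions of that equivalence.  Feeding r itself into the direction "x = x implies a hit"
   gives an index n with G(r, r)(n) = 1.  Kleene application is continuous, so G(r, s)(n) = 1
   still holds for every s agreeing with r on an initial segment of some length radius(r), and
   for those s the other direction computes a realizer of x = y, continuously in s.
   The initial segments of r of length radius(r), the labels, form a countable set; every
   realizer of existence has a shortest initial segment that is a label, and this choice is
   locally constant.  Sending n = Suc (code of a label l) to the element represented by l, and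
   every other n to the added point of X + 1, every clause of "this relation is a surjection
   N -> X + 1" is realized by a continuous map on Baire space, and such maps are K2-computable. *)

definition rfst :: "baire \<Rightarrow> baire" where "rfst c = (\<lambda>n. c (2*n))"

definition rsnd :: "baire \<Rightarrow> baire" where "rsnd c = (\<lambda>n. c (2*n+1))"

lemma rfst_rpair[simp]: "rfst (rpair a b) = a" by (simp add: rfst_def rpair_def)

lemma rsnd_rpair[simp]: "rsnd (rpair a b) = b" by (simp add: rsnd_def rpair_def)

lemma rpair_0[simp]: "rpair a b 0 = a 0" by (simp add: rpair_def)

lemma rfst_0: "rfst c 0 = c 0" by (simp add: rfst_def)

lemma rpair_rfst_rsnd[simp]: "rpair (rfst c) (rsnd c) = c"
  unfolding rpair_def rfst_def rsnd_def
  by (rule ext) (metis dvd_mult_div_cancel odd_two_times_div_two_succ)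

lemma rpair_eq_iff[simp]: "rpair a b = rpair a' b' \<longleftrightarrow> a = a' \<and> b = b'"
  by (metis rfst_rpair rsnd_rpair)

definition agree :: "nat \<Rightarrow> baire \<Rightarrow> baire \<Rightarrow> bool" where
  "agree k a b \<longleftrightarrow> (\<forall>i<k. a i = b i)"

lemma agree_iff_map: "agree k a b \<longleftrightarrow> map a [0..<k] = map b [0..<k]"
  unfolding agree_def map_eq_conv by (simp add: Ball_def)

lemma agree_mono: "agree k a b \<Longrightarrow> j \<le> k \<Longrightarrow> agree j a b"
  unfolding agree_def by auto

definition baire_cont_on :: "baire set \<Rightarrow> (baire \<Rightarrow> baire) \<Rightarrow> bool" where
  "baire_cont_on D \<phi> \<longleftrightarrow> (\<forall>a\<in>D. \<forall>n. \<exists>k. \<forall>a'\<in>D. agree k a' a \<longrightarrow> \<phi> a' n = \<phi> a n)"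

definition locally_const_on :: "baire set \<Rightarrow> (baire \<Rightarrow> 'b) \<Rightarrow> bool" where
  "locally_const_on D N \<longleftrightarrow> (\<forall>a\<in>D. \<exists>k. \<forall>a'\<in>D. agree k a' a \<longrightarrow> N a' = N a)"

lemma baire_cont_on_subset: "baire_cont_on D \<phi> \<Longrightarrow> D' \<subseteq> D \<Longrightarrow> baire_cont_on D' \<phi>"
  unfolding baire_cont_on_def by blast

lemma baire_cont_on_cong:
  "(\<And>a. a \<in> D \<Longrightarrow> \<phi> a = \<psi> a) \<Longrightarrow> baire_cont_on D \<phi> \<Longrightarrow> baire_cont_on D \<psi>"
  unfolding baire_cont_on_def by simp

lemma baire_cont_on_const[simp]: "baire_cont_on D (\<lambda>_. b)"
  unfolding baire_cont_on_def by auto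

lemma baire_cont_on_id[simp]: "baire_cont_on D (\<lambda>a. a)"
  unfolding baire_cont_on_def agree_def by (intro ballI allI exI[of _ "Suc _"]) auto

lemma baire_cont_on_rfst: "baire_cont_on D \<phi> \<Longrightarrow> baire_cont_on D (\<lambda>a. rfst (\<phi> a))"
  unfolding baire_cont_on_def rfst_def by blast

lemma baire_cont_on_rsnd: "baire_cont_on D \<phi> \<Longrightarrow> baire_cont_on D (\<lambda>a. rsnd (\<phi> a))"
  unfolding baire_cont_on_def rsnd_def by blast

lemma baire_cont_on_rpair:
  "baire_cont_on D \<phi> \<Longrightarrow> baire_cont_on D \<psi> \<Longrightarrow> baire_cont_on D (\<lambda>a. rpair (\<phi> a) (\<psi> a))"
  unfolding baire_cont_on_def
proof (intro ballI allI)
  fix a n assume "\<forall>a\<in>D. \<forall>n. \<exists>k. \<forall>a'\<in>D. agree k a' a \<longrightarrow> \<phi> a' n = \<phi> a n"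
    "\<forall>a\<in>D. \<forall>n. \<exists>k. \<forall>a'\<in>D. agree k a' a \<longrightarrow> \<psi> a' n = \<psi> a n" "a \<in> D"
  then obtain k1 k2 where k1: "\<forall>a'\<in>D. agree k1 a' a \<longrightarrow> \<phi> a' (n div 2) = \<phi> a (n div 2)"
    and k2: "\<forall>a'\<in>D. agree k2 a' a \<longrightarrow> \<psi> a' (n div 2) = \<psi> a (n div 2)" by blast
  show "\<exists>k. \<forall>a'\<in>D. agree k a' a \<longrightarrow> rpair (\<phi> a') (\<psi> a') n = rpair (\<phi> a) (\<psi> a) n"
  proof (intro exI[of _ "max k1 k2"] ballI impI)
    fix a' assume a': "a' \<in> D" "agree (max k1 k2) a' a"
    then have "agree k1 a' a" "agree k2 a' a" using agree_mono by auto
    then show "rpair (\<phi> a') (\<psi> a') n = rpair (\<phi> a) (\<psi> a) n" using k1 k2 a' by (simp add: rpair_def)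
  qed
qed

lemma locally_const_on_entry: "baire_cont_on D \<phi> \<Longrightarrow> locally_const_on D (\<lambda>a. \<phi> a i)"
  unfolding baire_cont_on_def locally_const_on_def by blast

lemma locally_const_on_compose: "locally_const_on D N \<Longrightarrow> locally_const_on D (\<lambda>a. g (N a))"
  unfolding locally_const_on_def
proof (intro ballI)
  fix a assume "\<forall>a\<in>D. \<exists>k. \<forall>a'\<in>D. agree k a' a \<longrightarrow> N a' = N a" "a \<in> D"
  then obtain k where "\<forall>a'\<in>D. agree k a' a \<longrightarrow> N a' = N a" by blast
  then show "\<exists>k. \<forall>a'\<in>D. agree k a' a \<longrightarrow> g (N a') = g (N a)" by (intro exI[of _ k]) simp
qed

lemma baire_cont_on_prefix:
  assumes c: "baire_cont_on D \<phi>" and a: "a \<in> D"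
  shows "\<exists>k. \<forall>a'\<in>D. agree k a' a \<longrightarrow> agree K (\<phi> a') (\<phi> a)"
proof (induction K)
  case 0 then show ?case by (simp add: agree_def)
next
  case (Suc K)
  then obtain k1 where k1: "\<forall>a'\<in>D. agree k1 a' a \<longrightarrow> agree K (\<phi> a') (\<phi> a)" by blast
  obtain k2 where k2: "\<forall>a'\<in>D. agree k2 a' a \<longrightarrow> \<phi> a' K = \<phi> a K"
    using c a unfolding baire_cont_on_def by blast
  show ?case
  proof (intro exI[of _ "max k1 k2"] ballI impI)
    fix a' assume "a' \<in> D" "agree (max k1 k2) a' a"
    then have "agree K (\<phi> a') (\<phi> a)" "\<phi> a' K = \<phi> a K"
      using k1 k2 agree_mono[of "max k1 k2" a' a] by auto
    then show "agree (Suc K) (\<phi> a') (\<phi> a)" unfolding agree_def using less_Suc_eq by auto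
  qed
qed

lemma baire_cont_on_compose:
  assumes c1: "baire_cont_on D' \<phi>" and c2: "baire_cont_on D \<psi>"
    and im: "\<And>a. a \<in> D \<Longrightarrow> \<psi> a \<in> D'"
  shows "baire_cont_on D (\<lambda>a. \<phi> (\<psi> a))"
  unfolding baire_cont_on_def
proof (intro ballI allI)
  fix a n assume a: "a \<in> D"
  obtain K where K: "\<forall>b'\<in>D'. agree K b' (\<psi> a) \<longrightarrow> \<phi> b' n = \<phi> (\<psi> a) n"
    using c1 im[OF a] unfolding baire_cont_on_def by blast
  obtain k where k: "\<forall>a'\<in>D. agree k a' a \<longrightarrow> agree K (\<psi> a') (\<psi> a)"
    using baire_cont_on_prefix[OF c2 a] by blast
  show "\<exists>k. \<forall>a'\<in>D. agree k a' a \<longrightarrow> \<phi> (\<psi> a') n = \<phi> (\<psi> a) n"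
    using K k im by blast
qed

lemma locally_const_on_compose_cont:
  assumes c1: "locally_const_on D' N" and c2: "baire_cont_on D \<psi>"
    and im: "\<And>a. a \<in> D \<Longrightarrow> \<psi> a \<in> D'"
  shows "locally_const_on D (\<lambda>a. N (\<psi> a))"
  unfolding locally_const_on_def
proof (intro ballI)
  fix a assume a: "a \<in> D"
  obtain K where K: "\<forall>b'\<in>D'. agree K b' (\<psi> a) \<longrightarrow> N b' = N (\<psi> a)"
    using c1 im[OF a] unfolding locally_const_on_def by blast
  obtain k where k: "\<forall>a'\<in>D. agree k a' a \<longrightarrow> agree K (\<psi> a') (\<psi> a)"
    using baire_cont_on_prefix[OF c2 a] by blast
  show "\<exists>k. \<forall>a'\<in>D. agree k a' a \<longrightarrow> N (\<psi> a') = N (\<psi> a)"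
    using K k im by blast
qed

lemma baire_cont_on_local:
  assumes "\<And>a. a \<in> D \<Longrightarrow> \<exists>k. baire_cont_on {a'\<in>D. agree k a' a} \<phi>"
  shows "baire_cont_on D \<phi>"
  unfolding baire_cont_on_def
proof (intro ballI allI)
  fix a n assume a: "a \<in> D"
  obtain k where k: "baire_cont_on {a'\<in>D. agree k a' a} \<phi>" using assms[OF a] by blast
  have "a \<in> {a'\<in>D. agree k a' a}" using a by (simp add: agree_def)
  then obtain k' where k': "\<forall>a'\<in>{a'\<in>D. agree k a' a}. agree k' a' a \<longrightarrow> \<phi> a' n = \<phi> a n"
    using k unfolding baire_cont_on_def by blast
  show "\<exists>k. \<forall>a'\<in>D. agree k a' a \<longrightarrow> \<phi> a' n = \<phi> a n"
  proof (intro exI[of _ "max k k'"] ballI impI)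
    fix a' assume a': "a' \<in> D" "agree (max k k') a' a"
    then have "agree k a' a" "agree k' a' a" using agree_mono by auto
    then show "\<phi> a' n = \<phi> a n" using k' a' by auto
  qed
qed

lemma baire_cont_on_if:
  assumes lc: "locally_const_on D C" and c1: "baire_cont_on {a\<in>D. C a} \<phi>" and c2: "baire_cont_on {a\<in>D. \<not> C a} \<psi>"
  shows "baire_cont_on D (\<lambda>a. if C a then \<phi> a else \<psi> a)"
proof (rule baire_cont_on_local)
  fix a assume a: "a \<in> D"
  obtain k where k: "\<forall>a'\<in>D. agree k a' a \<longrightarrow> C a' = C a" using lc a unfolding locally_const_on_def by blast
  show "\<exists>k. baire_cont_on {a'\<in>D. agree k a' a} (\<lambda>a. if C a then \<phi> a else \<psi> a)"
  proof (cases "C a")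
    case True
    have "baire_cont_on {a'\<in>D. agree k a' a} \<phi>" by (rule baire_cont_on_subset[OF c1]) (use k True in auto)
    then show ?thesis by (intro exI[of _ k]) (rule baire_cont_on_cong[rotated], auto simp: k True)
  next
    case False
    have "baire_cont_on {a'\<in>D. agree k a' a} \<psi>" by (rule baire_cont_on_subset[OF c2]) (use k False in auto)
    then show ?thesis by (intro exI[of _ k]) (rule baire_cont_on_cong[rotated], auto simp: k False)
  qed
qed

lemma baire_cont_on_const_seqs: "baire_cont_on (range (\<lambda>n::nat. \<lambda>_::nat. n)) \<phi>"
  unfolding baire_cont_on_def
proof (intro ballI allI exI[of _ 1] impI)
  fix a n a' assume "a \<in> range (\<lambda>n::nat. \<lambda>_::nat. n)" "a' \<in> range (\<lambda>n::nat. \<lambda>_::nat. n)" "agree 1 a' a"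
  then have "a' = a" unfolding agree_def by auto
  then show "\<phi> a' n = \<phi> a n" by simp
qed

lemma locally_const_on_head: "locally_const_on D (\<lambda>e. e 0 = 0)"
  unfolding locally_const_on_def by (intro ballI exI[of _ 1]) (auto simp: agree_def)

definition prefix_determines ::
    "baire set \<Rightarrow> (baire \<Rightarrow> baire) \<Rightarrow> nat \<Rightarrow> nat list \<Rightarrow> baire \<Rightarrow> bool" where
  "prefix_determines D \<phi> n l a \<longleftrightarrow>
     a \<in> D \<and> map a [0..<length l] = l \<and> (\<forall>a'\<in>D. agree (length l) a' a \<longrightarrow> \<phi> a' n = \<phi> a n)"

text \<open>The K2 code of \<phi> on D answers the query n # l with 1 + \<phi> a n for some a \<in> D whose
  initial segment l already fixes the n-th output of \<phi> on D, and with 0 (undefined) if there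
  is no such a.\<close>

fun K2_fun_table :: "baire set \<Rightarrow> (baire \<Rightarrow> baire) \<Rightarrow> nat list \<Rightarrow> nat" where
  "K2_fun_table D \<phi> [] = 0"
| "K2_fun_table D \<phi> (n # l) =
     (if \<exists>a. prefix_determines D \<phi> n l a then Suc (\<phi> (SOME a. prefix_determines D \<phi> n l a) n) else 0)"

definition K2_fun :: "baire set \<Rightarrow> (baire \<Rightarrow> baire) \<Rightarrow> baire" where
  "K2_fun D \<phi> = (\<lambda>m. K2_fun_table D \<phi> (from_nat m))"

lemma K2_fun_K2_code[simp]: "K2_fun D \<phi> (K2_code xs) = K2_fun_table D \<phi> xs"
  by (simp add: K2_fun_def K2_code_def)

lemma prefix_determines_value:
  assumes "a \<in> D" "prefix_determines D \<phi> n (map a [0..<k]) b"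
  shows "\<phi> b n = \<phi> a n"
proof -
  from assms(2) have "b \<in> D" "map b [0..<k] = map a [0..<k]"
    and "\<forall>a'\<in>D. agree k a' b \<longrightarrow> \<phi> a' n = \<phi> b n"
    unfolding prefix_determines_def by auto
  moreover then have "agree k a b" unfolding agree_iff_map by simp
  ultimately show ?thesis using assms(1) by auto
qed

lemma K2_app_K2_fun:
  assumes c: "baire_cont_on D \<phi>" and a: "a \<in> D"
  shows "K2_app (K2_fun D \<phi>) a = Some (\<phi> a)"
proof -
  have ex: "\<exists>k. K2_fun D \<phi> (K2_code (n # map a [0..<k])) > 0" for n
  proof -
    obtain k where k: "\<forall>a'\<in>D. agree k a' a \<longrightarrow> \<phi> a' n = \<phi> a n"
      using c a unfolding baire_cont_on_def by blast
    have "prefix_determines D \<phi> n (map a [0..<k]) a" using a k unfolding prefix_determines_def by simp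
    then show ?thesis by (intro exI[of _ k]) auto
  qed
  have val: "K2_fun D \<phi> (K2_code (n # map a [0..<k])) - 1 = \<phi> a n"
    if "K2_fun D \<phi> (K2_code (n # map a [0..<k])) > 0" for n k
  proof -
    from that have g: "\<exists>b. prefix_determines D \<phi> n (map a [0..<k]) b" by (auto split: if_splits)
    then have "prefix_determines D \<phi> n (map a [0..<k]) (SOME b. prefix_determines D \<phi> n (map a [0..<k]) b)"
      by (rule someI_ex)
    from prefix_determines_value[OF a this] g show ?thesis by simp
  qed
  let ?f = "K2_fun D \<phi>"
  have "\<forall>n. K2_defined_at ?f a n"
    using ex unfolding K2_defined_at_def by blast
  then have "K2_app ?f a = Some (\<lambda>n. ?f (K2_code (n # map a [0..<(LEAST k. ?f (K2_code (n # map a [0..<k])) > 0)])) - 1)"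
    unfolding K2_app_def by (rule if_P)
  also have "(\<lambda>n. ?f (K2_code (n # map a [0..<(LEAST k. ?f (K2_code (n # map a [0..<k])) > 0)])) - 1) = \<phi> a"
  proof (rule ext)
    fix n show "?f (K2_code (n # map a [0..<(LEAST k. ?f (K2_code (n # map a [0..<k])) > 0)])) - 1 = \<phi> a n"
      by (rule val, rule LeastI_ex[OF ex])
  qed
  finally show ?thesis .
qed

definition K2_const :: "baire \<Rightarrow> baire" where "K2_const b = K2_fun UNIV (\<lambda>_. b)"

lemma K2_app_K2_const[simp]: "K2_app (K2_const b) a = Some b"
  unfolding K2_const_def by (rule K2_app_K2_fun) auto

definition K2_id :: baire where "K2_id = K2_fun UNIV (\<lambda>a. a)"

lemma K2_app_K2_id[simp]: "K2_app K2_id a = Some a"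
  unfolding K2_id_def by (rule K2_app_K2_fun) auto

lemma K2_app_cont:
  assumes "K2_app f a = Some b"
  shows "\<exists>K. \<forall>f' a' b'.
    agree K f' f \<longrightarrow> agree K a' a \<longrightarrow> K2_app f' a' = Some b' \<longrightarrow> b' n = b n"
proof -
  let ?c = "\<lambda>f a k. f (K2_code (n # map a [0..<k]))"
  have def: "\<forall>n. K2_defined_at f a n" and bd: "b n = ?c f a (LEAST k. ?c f a k > 0) - 1"
    using assms unfolding K2_app_def by (auto split: if_splits)
  from def have ex: "\<exists>k. ?c f a k > 0" unfolding K2_defined_at_def by blast
  define k0 where "k0 = (LEAST k. ?c f a k > 0)"
  have pos: "?c f a k0 > 0" unfolding k0_def using LeastI_ex[OF ex] .
  have zero: "\<not> ?c f a j > 0" if "j < k0" for j using not_less_Least[OF that[unfolded k0_def]] .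
  define M where "M = Suc (Max ((\<lambda>j. K2_code (n # map a [0..<j])) ` {..k0}))"
  have Mb: "K2_code (n # map a [0..<j]) < M" if "j \<le> k0" for j
    unfolding M_def using that by (simp add: le_imp_less_Suc)
  show ?thesis
  proof (intro exI[of _ "max M k0"] allI impI)
    fix f' a' b'
    assume af: "agree (max M k0) f' f" and aa: "agree (max M k0) a' a" and ap: "K2_app f' a' = Some b'"
    have same: "?c f' a' j = ?c f a j" if "j \<le> k0" for j
    proof -
      have "map a' [0..<j] = map a [0..<j]"
      proof -
        have "agree j a' a" using agree_mono[OF aa, of j] that by simp
        then show ?thesis unfolding agree_iff_map .
      qed
      moreover have "f' (K2_code (n # map a [0..<j])) = f (K2_code (n # map a [0..<j]))"
        using af Mb[OF that] unfolding agree_def by simp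
      ultimately show ?thesis by (simp only:)
    qed
    have L: "(LEAST k. ?c f' a' k > 0) = k0"
    proof (rule Least_equality)
      show "?c f' a' k0 > 0" using same pos by simp
      show "k0 \<le> k" if "?c f' a' k > 0" for k
        using that same zero by (metis less_imp_le_nat not_le_imp_less)
    qed
    have "b' n = ?c f' a' (LEAST k. ?c f' a' k > 0) - 1"
      using ap unfolding K2_app_def by (auto split: if_splits)
    then show "b' n = b n" using L bd same[of k0] k0_def by simp
  qed
qed

lemma baire_cont_on_K2_app:
  assumes c1: "baire_cont_on D \<phi>" and c2: "baire_cont_on D \<psi>"
    and def: "\<And>a. a \<in> D \<Longrightarrow> K2_app (\<phi> a) (\<psi> a) \<noteq> None"
  shows "baire_cont_on D (\<lambda>a. the (K2_app (\<phi> a) (\<psi> a)))"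
  unfolding baire_cont_on_def
proof (intro ballI allI)
  fix a n assume a: "a \<in> D"
  obtain b where b: "K2_app (\<phi> a) (\<psi> a) = Some b" using def[OF a] by blast
  obtain K where K: "\<forall>f' a' b'.
      agree K f' (\<phi> a) \<longrightarrow> agree K a' (\<psi> a) \<longrightarrow> K2_app f' a' = Some b' \<longrightarrow> b' n = b n"
    using K2_app_cont[OF b] by blast
  obtain k1 where k1: "\<forall>a'\<in>D. agree k1 a' a \<longrightarrow> agree K (\<phi> a') (\<phi> a)"
    using baire_cont_on_prefix[OF c1 a] by blast
  obtain k2 where k2: "\<forall>a'\<in>D. agree k2 a' a \<longrightarrow> agree K (\<psi> a') (\<psi> a)"
    using baire_cont_on_prefix[OF c2 a] by blast
  show "\<exists>k. \<forall>a'\<in>D.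
    agree k a' a \<longrightarrow> the (K2_app (\<phi> a') (\<psi> a')) n = the (K2_app (\<phi> a) (\<psi> a)) n"
  proof (intro exI[of _ "max k1 k2"] ballI impI)
    fix a' assume a': "a' \<in> D" "agree (max k1 k2) a' a"
    then have "agree K (\<phi> a') (\<phi> a)" "agree K (\<psi> a') (\<psi> a)"
      using k1 k2 agree_mono[of "max k1 k2" a' a] by auto
    moreover obtain b' where b': "K2_app (\<phi> a') (\<psi> a') = Some b'" using def[OF a'(1)] by blast
    ultimately have "b' n = b n" using K by blast
    then show "the (K2_app (\<phi> a') (\<psi> a')) n = the (K2_app (\<phi> a) (\<psi> a)) n"
      using b b' by simp
  qed
qed

lemma baire_cont_on_K2_app_fixed:
  assumes "baire_cont_on D \<psi>" "\<And>a. a \<in> D \<Longrightarrow> K2_app f (\<psi> a) \<noteq> None"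
  shows "baire_cont_on D (\<lambda>a. the (K2_app f (\<psi> a)))"
  using baire_cont_on_K2_app[OF baire_cont_on_const[of D f] assms(1)] assms(2) by simp

lemma mem_r_conj: "c \<in> r_conj P Q \<longleftrightarrow> rfst c \<in> P \<and> rsnd c \<in> Q"
proof
  assume "c \<in> r_conj P Q" then show "rfst c \<in> P \<and> rsnd c \<in> Q" unfolding r_conj_def by auto
next
  assume "rfst c \<in> P \<and> rsnd c \<in> Q"
  then show "c \<in> r_conj P Q" unfolding r_conj_def by (intro CollectI exI[of _ "rfst c"] exI[of _ "rsnd c"]) simp
qed

lemma r_conjI: "a \<in> P \<Longrightarrow> b \<in> Q \<Longrightarrow> rpair a b \<in> r_conj P Q"
  by (simp add: mem_r_conj)

lemma mem_r_imp: "r \<in> r_imp P Q \<longleftrightarrow> (\<forall>a\<in>P. \<exists>b\<in>Q. K2_app r a = Some b)"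
  unfolding r_imp_def by simp

lemma mem_all_in: "f \<in> all_in E \<Phi> \<longleftrightarrow> (\<forall>x. \<forall>r\<in>E x x. \<exists>b\<in>\<Phi> x. K2_app f r = Some b)"
  unfolding all_in_def r_all_def r_imp_def by simp

lemma all_inI: "(\<And>x. f \<in> r_imp (E x x) (\<Phi> x)) \<Longrightarrow> f \<in> all_in E \<Phi>"
  unfolding all_in_def r_all_def by blast

lemma all_inD: "f \<in> all_in E \<Phi> \<Longrightarrow> r \<in> E x x \<Longrightarrow> \<exists>b. K2_app f r = Some b \<and> b \<in> \<Phi> x"
  unfolding mem_all_in by blast

lemma r_impD: "f \<in> r_imp P Q \<Longrightarrow> a \<in> P \<Longrightarrow> \<exists>b. K2_app f a = Some b \<and> b \<in> Q"
  unfolding mem_r_imp by blast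

lemma mem_ex_in: "c \<in> ex_in E \<Phi> \<longleftrightarrow> (\<exists>x. rfst c \<in> E x x \<and> rsnd c \<in> \<Phi> x)"
  unfolding ex_in_def r_ex_def by (simp add: mem_r_conj)

lemma ex_inI: "a \<in> E x x \<Longrightarrow> b \<in> \<Phi> x \<Longrightarrow> rpair a b \<in> ex_in E \<Phi>"
  unfolding mem_ex_in by auto

lemma mem_nno_eq[simp]: "e \<in> nno_eq n m \<longleftrightarrow> n = m \<and> e = (\<lambda>_. n)"
  unfolding nno_eq_def by auto

lemma mem_r_iff: "c \<in> r_iff P Q \<longleftrightarrow> rfst c \<in> r_imp P Q \<and> rsnd c \<in> r_imp Q P"
  unfolding r_iff_def by (rule mem_r_conj)

lemma mem_ex_in_nno_eq: "c \<in> ex_in nno_eq \<Phi> \<longleftrightarrow> (\<exists>n g. c = rpair (\<lambda>_. n) g \<and> g \<in> \<Phi> n)"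
proof
  assume "c \<in> ex_in nno_eq \<Phi>"
  then obtain n where "rfst c = (\<lambda>_. n)" "rsnd c \<in> \<Phi> n" unfolding mem_ex_in by auto
  then show "\<exists>n g. c = rpair (\<lambda>_. n) g \<and> g \<in> \<Phi> n" by (metis rpair_rfst_rsnd)
qed (auto simp: mem_ex_in)

lemma K2_fun_mem_r_imp:
  assumes "baire_cont_on D f" "P \<subseteq> D" "\<And>a. a \<in> P \<Longrightarrow> f a \<in> Q"
  shows "K2_fun D f \<in> r_imp P Q"
  unfolding mem_r_imp using assms K2_app_K2_fun by blast

lemma K2_const_mem_all_in: "(\<And>x. c \<in> \<Phi> x) \<Longrightarrow> K2_const c \<in> all_in E \<Phi>"
  unfolding mem_all_in by simp

lemma K2_id_mem_r_iff: "rpair K2_id K2_id \<in> r_iff P P"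
  unfolding mem_r_iff mem_r_imp by simp

lemma nno_fun_rel_unique:
  assumes u: "u \<in> all_in nno_eq (\<lambda>a. all_in nno_eq (\<lambda>b. all_in nno_eq (\<lambda>b'.
                r_imp (r_conj (G (a, b)) (G (a, b'))) (nno_eq b b'))))"
    and "g \<in> G (n, m)" "g' \<in> G (n, m')"
  shows "m = m'"
proof -
  obtain u1 where u1: "u1 \<in> all_in nno_eq (\<lambda>b. all_in nno_eq (\<lambda>b'.
                r_imp (r_conj (G (n, b)) (G (n, b'))) (nno_eq b b')))"
    using all_inD[OF u, of "\<lambda>_. n" n] by auto
  obtain u2 where u2: "u2 \<in> all_in nno_eq (\<lambda>b'. r_imp (r_conj (G (n, m)) (G (n, b'))) (nno_eq m b'))"
    using all_inD[OF u1, of "\<lambda>_. m" m] by auto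
  obtain u3 where "u3 \<in> r_imp (r_conj (G (n, m)) (G (n, m'))) (nno_eq m m')"
    using all_inD[OF u2, of "\<lambda>_. m'" m'] by auto
  moreover have "rpair g g' \<in> r_conj (G (n, m)) (G (n, m'))" using assms(2,3) by (simp add: mem_r_conj)
  ultimately obtain e where "e \<in> nno_eq m m'" using r_impD by blast
  then show ?thesis by simp
qed

definition prefix_len :: "nat list set \<Rightarrow> baire \<Rightarrow> nat" where
  "prefix_len L s = (LEAST j. map s [0..<j] \<in> L)"

definition shortest_prefix :: "nat list set \<Rightarrow> baire \<Rightarrow> nat list" where
  "shortest_prefix L s = map s [0..<prefix_len L s]"

lemma shortest_prefix_mem: "map s [0..<j] \<in> L \<Longrightarrow> shortest_prefix L s \<in> L"
  unfolding shortest_prefix_def prefix_len_def by (rule LeastI)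

lemma shortest_prefix_eq:
  assumes "map s [0..<j] \<in> L" and "agree (prefix_len L s) s' s"
  shows "shortest_prefix L s' = shortest_prefix L s"
proof -
  have eq: "map s' [0..<i] = map s [0..<i]" if "i \<le> prefix_len L s" for i
    using agree_mono[OF assms(2) that] agree_iff_map by blast
  have "prefix_len L s' = prefix_len L s"
    unfolding prefix_len_def[of L s']
  proof (rule Least_equality)
    show "map s' [0..<prefix_len L s] \<in> L"
      using shortest_prefix_mem[OF assms(1)] unfolding shortest_prefix_def eq[OF order_refl] .
    show "prefix_len L s \<le> i" if "map s' [0..<i] \<in> L" for i
    proof (rule ccontr)
      assume "\<not> prefix_len L s \<le> i"
      then have "map s [0..<i] \<in> L" using that eq[of i] by simp
      then have "prefix_len L s \<le> i" unfolding prefix_len_def by (rule Least_le)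
      with \<open>\<not> prefix_len L s \<le> i\<close> show False by simp
    qed
  qed
  then show ?thesis unfolding shortest_prefix_def using eq[OF order_refl] by simp
qed

lemma locally_const_on_shortest_prefix:
  assumes "\<And>s. s \<in> D \<Longrightarrow> \<exists>j. map s [0..<j] \<in> L"
  shows "locally_const_on D (shortest_prefix L)"
  unfolding locally_const_on_def using assms shortest_prefix_eq by blast

locale open_equality =
  fixes E :: "'a \<Rightarrow> 'a \<Rightarrow> baire set" and r_open :: baire
  assumes is_object: "is_object E" and r_open: "r_open \<in> eq_intrinsically_open E"
begin

definition open_witness :: "baire \<Rightarrow> baire \<Rightarrow> baire" where
  "open_witness r s = the (K2_app (the (K2_app r_open r)) s)"

definition seq_total :: "baire \<Rightarrow> baire" where "seq_total c = rfst (rfst (rfst (rsnd c)))"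

definition seq_unique :: "baire \<Rightarrow> baire" where "seq_unique c = rsnd (rfst (rfst (rsnd c)))"

definition eq_to_hit :: "baire \<Rightarrow> baire" where "eq_to_hit c = rfst (rsnd (rsnd c))"

definition hit_to_eq :: "baire \<Rightarrow> baire" where "hit_to_eq c = rsnd (rsnd (rsnd c))"

lemma open_witness_app:
  assumes "r \<in> E x x" "s \<in> E y y"
  shows "K2_app (the (K2_app r_open r)) s = Some (open_witness r s)"
    and "\<exists>G. rsnd (open_witness r s) \<in> r_conj (is_binseq G) (r_iff (E x y) (ex_in nno_eq (\<lambda>n. G (n, 1))))"
proof -
  obtain b1 where b1: "K2_app r_open r = Some b1"
    and b1m: "b1 \<in> all_in E (\<lambda>y. ex_in (pow_eq (prod_eq nno_eq nno_eq)) (\<lambda>G.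
         r_conj (is_binseq G) (r_iff (E x y) (ex_in nno_eq (\<lambda>n. G (n, 1))))))"
    using all_inD[OF r_open[unfolded eq_intrinsically_open_def] assms(1)] by blast
  obtain b2 where b2: "K2_app b1 s = Some b2"
    and b2m: "b2 \<in> ex_in (pow_eq (prod_eq nno_eq nno_eq)) (\<lambda>G.
         r_conj (is_binseq G) (r_iff (E x y) (ex_in nno_eq (\<lambda>n. G (n, 1)))))"
    using all_inD[OF b1m assms(2)] by blast
  have "open_witness r s = b2" using b1 b2 by (simp add: open_witness_def)
  then show "K2_app (the (K2_app r_open r)) s = Some (open_witness r s)"
    and "\<exists>G. rsnd (open_witness r s) \<in> r_conj (is_binseq G) (r_iff (E x y) (ex_in nno_eq (\<lambda>n. G (n, 1))))"
    using b1 b2 b2m unfolding mem_ex_in by auto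
qed

lemma open_witness_seq:
  assumes "r \<in> E x x" "s \<in> E y y"
  obtains G where
    "\<And>n. \<exists>m g. K2_app (seq_total (open_witness r s)) (\<lambda>_. n) = Some (rpair (\<lambda>_. m) g) \<and> g \<in> G (n, m)"
    "\<And>n m m' g g'. g \<in> G (n, m) \<Longrightarrow> g' \<in> G (n, m') \<Longrightarrow> m = m'"
    "\<And>e. e \<in> E x y \<Longrightarrow> \<exists>n g. K2_app (eq_to_hit (open_witness r s)) e = Some (rpair (\<lambda>_. n) g) \<and> g \<in> G (n, 1)"
    "\<And>n g. g \<in> G (n, 1) \<Longrightarrow> \<exists>w\<in>E x y. K2_app (hit_to_eq (open_witness r s)) (rpair (\<lambda>_. n) g) = Some w"
proof -
  let ?w = "open_witness r s"
  obtain G where "rsnd ?w \<in> r_conj (is_binseq G) (r_iff (E x y) (ex_in nno_eq (\<lambda>n. G (n, 1))))"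
    using open_witness_app(2)[OF assms] by blast
  then have total: "seq_total ?w \<in> all_in nno_eq (\<lambda>a. ex_in nno_eq (\<lambda>b. G (a, b)))"
    and unique: "seq_unique ?w \<in> all_in nno_eq (\<lambda>a. all_in nno_eq (\<lambda>b. all_in nno_eq (\<lambda>b'.
                r_imp (r_conj (G (a, b)) (G (a, b'))) (nno_eq b b'))))"
    and to_hit: "eq_to_hit ?w \<in> r_imp (E x y) (ex_in nno_eq (\<lambda>n. G (n, 1)))"
    and to_eq: "hit_to_eq ?w \<in> r_imp (ex_in nno_eq (\<lambda>n. G (n, 1))) (E x y)"
    unfolding mem_r_conj is_binseq_def is_fun_rel_def mem_r_iff
      seq_total_def seq_unique_def eq_to_hit_def hit_to_eq_def by auto
  show thesis
  proof (rule that)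
    show "\<exists>m g. K2_app (seq_total ?w) (\<lambda>_. n) = Some (rpair (\<lambda>_. m) g) \<and> g \<in> G (n, m)" for n
      using all_inD[OF total, of "\<lambda>_. n" n] unfolding mem_ex_in_nno_eq by auto
    show "m = m'" if "g \<in> G (n, m)" "g' \<in> G (n, m')" for n m m' g g'
      using nno_fun_rel_unique[OF unique that] .
    show "\<exists>n g. K2_app (eq_to_hit ?w) e = Some (rpair (\<lambda>_. n) g) \<and> g \<in> G (n, 1)" if "e \<in> E x y" for e
      using r_impD[OF to_hit that] unfolding mem_ex_in_nno_eq by auto
    show "\<exists>v\<in>E x y. K2_app (hit_to_eq ?w) (rpair (\<lambda>_. n) g) = Some v" if "g \<in> G (n, 1)" for n g
      using r_impD[OF to_eq, of "rpair (\<lambda>_. n) g"] that unfolding mem_ex_in_nno_eq by auto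
  qed
qed

definition exist_realizers :: "baire set" where "exist_realizers = {r. \<exists>x. r \<in> E x x}"

definition hit_index :: "baire \<Rightarrow> nat" where
  "hit_index r = the (K2_app (eq_to_hit (open_witness r r)) r) 0"

text \<open>seq_at_hit r s realizes the value of the sequence G(r, s) supplied by r_open at
  n = hit_index r; its head is that value.\<close>

definition seq_at_hit :: "baire \<Rightarrow> baire \<Rightarrow> baire" where
  "seq_at_hit r s = the (K2_app (seq_total (open_witness r s)) (\<lambda>_. hit_index r))"

definition eq_witness :: "baire \<Rightarrow> baire \<Rightarrow> baire" where
  "eq_witness r s = the (K2_app (hit_to_eq (open_witness r s)) (rpair (\<lambda>_. hit_index r) (rsnd (seq_at_hit r s))))"

lemma seq_at_hit_diag:
  assumes "r \<in> E x x"
  shows "seq_at_hit r r 0 = 1"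
proof -
  obtain G where total: "\<And>n. \<exists>m g. K2_app (seq_total (open_witness r r)) (\<lambda>_. n) = Some (rpair (\<lambda>_. m) g) \<and> g \<in> G (n, m)"
    and unique: "\<And>n m m' g g'. g \<in> G (n, m) \<Longrightarrow> g' \<in> G (n, m') \<Longrightarrow> m = m'"
    and to_hit: "\<And>e. e \<in> E x x \<Longrightarrow> \<exists>n g. K2_app (eq_to_hit (open_witness r r)) e = Some (rpair (\<lambda>_. n) g) \<and> g \<in> G (n, 1)"
    by (rule open_witness_seq[OF assms assms]) blast
  obtain n g where hit: "K2_app (eq_to_hit (open_witness r r)) r = Some (rpair (\<lambda>_. n) g)" "g \<in> G (n, 1)"
    using to_hit[OF assms] by blast
  then have n: "hit_index r = n" by (simp add: hit_index_def)
  obtain m g' where m: "K2_app (seq_total (open_witness r r)) (\<lambda>_. n) = Some (rpair (\<lambda>_. m) g')" "g' \<in> G (n, m)"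
    using total by blast
  have "m = 1" using unique[OF hit(2) m(2)] by simp
  then show ?thesis using n m(1) by (simp add: seq_at_hit_def)
qed

lemma baire_cont_on_open_witness:
  assumes "r \<in> exist_realizers"
  shows "baire_cont_on exist_realizers (open_witness r)"
  unfolding open_witness_def
  by (rule baire_cont_on_K2_app_fixed[OF baire_cont_on_id])
    (use assms open_witness_app(1) in \<open>auto simp: exist_realizers_def\<close>)

lemma baire_cont_on_seq_at_hit:
  assumes "r \<in> exist_realizers"
  shows "baire_cont_on exist_realizers (seq_at_hit r)"
  unfolding seq_at_hit_def
proof (rule baire_cont_on_K2_app[where \<psi> = "\<lambda>_. \<lambda>_. hit_index r"])
  show "baire_cont_on exist_realizers (\<lambda>s. seq_total (open_witness r s))" unfolding seq_total_def
    by (intro baire_cont_on_rfst baire_cont_on_rsnd baire_cont_on_open_witness assms)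
  show "baire_cont_on exist_realizers (\<lambda>_. \<lambda>_. hit_index r)" by simp
  fix s assume "s \<in> exist_realizers"
  then obtain x y where r: "r \<in> E x x" and s: "s \<in> E y y" using assms unfolding exist_realizers_def by blast
  obtain G where "\<And>n. \<exists>m g. K2_app (seq_total (open_witness r s)) (\<lambda>_. n) = Some (rpair (\<lambda>_. m) g) \<and> g \<in> G (n, m)"
    by (rule open_witness_seq[OF r s]) blast
  then show "K2_app (seq_total (open_witness r s)) (\<lambda>_. hit_index r) \<noteq> None" by force
qed

lemma seq_at_hit_locally_one:
  assumes "r \<in> exist_realizers"
  shows "\<exists>k. \<forall>s\<in>exist_realizers. agree k s r \<longrightarrow> seq_at_hit r s 0 = 1"
proof -
  obtain x where "r \<in> E x x" using assms unfolding exist_realizers_def by blast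
  moreover obtain k where "\<forall>s\<in>exist_realizers. agree k s r \<longrightarrow> seq_at_hit r s 0 = seq_at_hit r r 0"
    using baire_cont_on_seq_at_hit[OF assms] assms unfolding baire_cont_on_def by blast
  ultimately show ?thesis using seq_at_hit_diag by auto
qed

definition radius :: "baire \<Rightarrow> nat" where
  "radius r = (SOME k. \<forall>s\<in>exist_realizers. agree k s r \<longrightarrow> seq_at_hit r s 0 = 1)"

lemma seq_at_hit_near:
  "r \<in> exist_realizers \<Longrightarrow> s \<in> exist_realizers \<Longrightarrow> agree (radius r) s r \<Longrightarrow> seq_at_hit r s 0 = 1"
  unfolding radius_def using someI_ex[OF seq_at_hit_locally_one] by blast

lemma eq_witness_near:
  assumes r: "r \<in> E x x" and s: "s \<in> E y y" and near: "agree (radius r) s r"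
  shows "K2_app (hit_to_eq (open_witness r s)) (rpair (\<lambda>_. hit_index r) (rsnd (seq_at_hit r s))) = Some (eq_witness r s)"
    and "eq_witness r s \<in> E x y"
proof -
  obtain G where total: "\<And>n. \<exists>m g. K2_app (seq_total (open_witness r s)) (\<lambda>_. n) = Some (rpair (\<lambda>_. m) g) \<and> g \<in> G (n, m)"
    and to_eq: "\<And>n g. g \<in> G (n, 1) \<Longrightarrow> \<exists>w\<in>E x y. K2_app (hit_to_eq (open_witness r s)) (rpair (\<lambda>_. n) g) = Some w"
    by (rule open_witness_seq[OF r s]) blast
  obtain m g where m: "K2_app (seq_total (open_witness r s)) (\<lambda>_. hit_index r) = Some (rpair (\<lambda>_. m) g)" "g \<in> G (hit_index r, m)"
    using total by blast
  have "seq_at_hit r s 0 = 1"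
    using seq_at_hit_near r s near unfolding exist_realizers_def by blast
  then have "m = 1" and "rsnd (seq_at_hit r s) = g" using m(1) unfolding seq_at_hit_def by simp_all
  then obtain w where "w \<in> E x y" "K2_app (hit_to_eq (open_witness r s)) (rpair (\<lambda>_. hit_index r) (rsnd (seq_at_hit r s))) = Some w"
    using to_eq m(2) by blast
  then show "K2_app (hit_to_eq (open_witness r s)) (rpair (\<lambda>_. hit_index r) (rsnd (seq_at_hit r s))) = Some (eq_witness r s)"
    and "eq_witness r s \<in> E x y" unfolding eq_witness_def by simp_all
qed

lemma baire_cont_on_eq_witness:
  assumes "r \<in> exist_realizers"
  shows "baire_cont_on {s\<in>exist_realizers. agree (radius r) s r} (eq_witness r)"
  unfolding eq_witness_def
proof (rule baire_cont_on_K2_app)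
  let ?S = "{s\<in>exist_realizers. agree (radius r) s r}"
  show "baire_cont_on ?S (\<lambda>s. hit_to_eq (open_witness r s))" unfolding hit_to_eq_def
    by (rule baire_cont_on_subset[of exist_realizers])
      (intro baire_cont_on_rsnd baire_cont_on_open_witness assms, auto)
  show "baire_cont_on ?S (\<lambda>s. rpair (\<lambda>_. hit_index r) (rsnd (seq_at_hit r s)))"
    by (rule baire_cont_on_subset[of exist_realizers])
      (intro baire_cont_on_rpair baire_cont_on_const baire_cont_on_rsnd baire_cont_on_seq_at_hit assms, auto)
  fix s assume "s \<in> ?S"
  then obtain x y where "r \<in> E x x" "s \<in> E y y" "agree (radius r) s r"
    using assms unfolding exist_realizers_def by blast
  from eq_witness_near(1)[OF this]
  show "K2_app (hit_to_eq (open_witness r s)) (rpair (\<lambda>_. hit_index r) (rsnd (seq_at_hit r s))) \<noteq> None" by simp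
qed

definition sym_code :: baire where
  "sym_code = (SOME f. \<forall>x y. f \<in> r_imp (E x y) (E y x))"

definition trans_code :: baire where
  "trans_code = (SOME f. \<forall>x y z. f \<in> r_imp (r_conj (E x y) (E y z)) (E x z))"

definition sym_of :: "baire \<Rightarrow> baire" where "sym_of w = the (K2_app sym_code w)"

definition trans_of :: "baire \<Rightarrow> baire" where "trans_of w = the (K2_app trans_code w)"

lemma K2_app_sym_code:
  assumes "w \<in> E x y"
  shows "K2_app sym_code w = Some (sym_of w)" and "sym_of w \<in> E y x"
proof -
  obtain f where "f \<in> r_all (\<lambda>x. r_all (\<lambda>y. r_imp (E x y) (E y x)))"
    using is_object unfolding is_object_def by blast
  then have "\<exists>f. \<forall>x y. f \<in> r_imp (E x y) (E y x)" unfolding r_all_def by blast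
  from someI_ex[OF this] have "sym_code \<in> r_imp (E x y) (E y x)" unfolding sym_code_def by blast
  from r_impD[OF this assms] show "K2_app sym_code w = Some (sym_of w)" and "sym_of w \<in> E y x"
    unfolding sym_of_def by auto
qed

lemma K2_app_trans_code:
  assumes "w \<in> E x y" "w' \<in> E y z"
  shows "K2_app trans_code (rpair w w') = Some (trans_of (rpair w w'))" and "trans_of (rpair w w') \<in> E x z"
proof -
  obtain f where "f \<in> r_all (\<lambda>x. r_all (\<lambda>y. r_all (\<lambda>z. r_imp (r_conj (E x y) (E y z)) (E x z))))"
    using is_object unfolding is_object_def by blast
  then have "\<exists>f. \<forall>x y z. f \<in> r_imp (r_conj (E x y) (E y z)) (E x z)" unfolding r_all_def by blast
  from someI_ex[OF this] have "trans_code \<in> r_imp (r_conj (E x y) (E y z)) (E x z)" unfolding trans_code_def by blast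
  moreover have "rpair w w' \<in> r_conj (E x y) (E y z)" using assms by (simp add: mem_r_conj)
  ultimately show "K2_app trans_code (rpair w w') = Some (trans_of (rpair w w'))" and "trans_of (rpair w w') \<in> E x z"
    unfolding trans_of_def using r_impD by fastforce+
qed

definition labels :: "nat list set" where
  "labels = (\<lambda>r. map r [0..<radius r]) ` exist_realizers"

definition label_rep :: "nat list \<Rightarrow> baire" where
  "label_rep l = (SOME r. r \<in> exist_realizers \<and> map r [0..<radius r] = l)"

definition label_elem :: "nat list \<Rightarrow> 'a" where
  "label_elem l = (SOME x. label_rep l \<in> E x x)"

abbreviation label :: "baire \<Rightarrow> nat list" where "label \<equiv> shortest_prefix labels"

lemma label_rep_spec: "l \<in> labels \<Longrightarrow> label_rep l \<in> exist_realizers \<and> map (label_rep l) [0..<radius (label_rep l)] = l"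
proof -
  assume "l \<in> labels"
  then have "\<exists>r. r \<in> exist_realizers \<and> map r [0..<radius r] = l" unfolding labels_def by blast
  then show ?thesis unfolding label_rep_def by (rule someI_ex)
qed

lemma label_rep_exist: "l \<in> labels \<Longrightarrow> label_rep l \<in> E (label_elem l) (label_elem l)"
proof -
  assume "l \<in> labels"
  then have "\<exists>x. label_rep l \<in> E x x" using label_rep_spec unfolding exist_realizers_def by blast
  then show ?thesis unfolding label_elem_def by (rule someI_ex)
qed

lemma exist_realizer_has_label: "s \<in> exist_realizers \<Longrightarrow> map s [0..<radius s] \<in> labels"
  unfolding labels_def by blast

lemma label_spec:
  assumes "s \<in> exist_realizers"
  shows "label s \<in> labels" and "agree (radius (label_rep (label s))) s (label_rep (label s))"
proof -
  show l: "label s \<in> labels" by (rule shortest_prefix_mem[OF exist_realizer_has_label[OF assms]])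
  have "map (label_rep (label s)) [0..<radius (label_rep (label s))] = map s [0..<prefix_len labels s]"
    using label_rep_spec[OF l] unfolding shortest_prefix_def by simp
  moreover from this have "radius (label_rep (label s)) = prefix_len labels s"
    by (metis length_map length_upt diff_zero)
  ultimately show "agree (radius (label_rep (label s))) s (label_rep (label s))"
    unfolding agree_iff_map by simp
qed

lemma locally_const_on_label: "locally_const_on exist_realizers label"
  by (rule locally_const_on_shortest_prefix) (use exist_realizer_has_label in blast)

text \<open>The surjection N \<rightarrow> X + 1 sends Suc (to_nat l) for a label l to label_elem l, and every
  other number (0 included) to the added point.  A realizer of enum (n, b) carries n, a realizer
  that b exists and, for b = Some x, a realizer of label_elem l = x.\<close>

abbreviation enum_real :: "nat \<Rightarrow> nat \<Rightarrow> baire \<Rightarrow> baire \<Rightarrow> baire" where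
  "enum_real n t r w \<equiv> rpair (\<lambda>_. n) (rpair (rpair (\<lambda>_. t) r) w)"

abbreviation E_plus_one :: "'a option \<Rightarrow> 'a option \<Rightarrow> baire set" where "E_plus_one \<equiv> sum_one_eq E"

abbreviation E_graph :: "nat \<times> 'a option \<Rightarrow> nat \<times> 'a option \<Rightarrow> baire set" where "E_graph \<equiv> prod_eq nno_eq (sum_one_eq E)"

definition enum :: "nat \<times> 'a option \<Rightarrow> baire set" where
  "enum z = (case z of (n, Some x) \<Rightarrow>
      {enum_real n 0 r w | r w l. r \<in> E x x \<and> l \<in> labels \<and> n = Suc (to_nat l) \<and> w \<in> E (label_elem l) x}
    | (n, None) \<Rightarrow> {enum_real n 1 r w | r w. \<forall>l\<in>labels. n \<noteq> Suc (to_nat l)})"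

lemma enum_SomeE:
  "c \<in> enum (n, Some x) \<Longrightarrow>
    \<exists>r w l. c = enum_real n 0 r w \<and> r \<in> E x x \<and> l \<in> labels \<and> n = Suc (to_nat l) \<and> w \<in> E (label_elem l) x"
  unfolding enum_def by simp

lemma enum_SomeI:
  "r \<in> E x x \<Longrightarrow> l \<in> labels \<Longrightarrow> w \<in> E (label_elem l) x \<Longrightarrow> n = Suc (to_nat l) \<Longrightarrow>
    enum_real n 0 r w \<in> enum (n, Some x)"
  unfolding enum_def by auto

lemma enum_NoneE:
  "c \<in> enum (n, None) \<Longrightarrow> \<exists>r w. c = enum_real n 1 r w \<and> (\<forall>l\<in>labels. n \<noteq> Suc (to_nat l))"
  unfolding enum_def by simp

lemma enum_NoneI: "\<forall>l\<in>labels. n \<noteq> Suc (to_nat l) \<Longrightarrow> enum_real n 1 r w \<in> enum (n, None)"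
  unfolding enum_def by auto

lemma mem_E_plus_one_Some:
  "e \<in> E_plus_one (Some x) (Some y) \<longleftrightarrow> rfst e = (\<lambda>_. 0) \<and> rsnd e \<in> E x y"
proof
  assume "e \<in> E_plus_one (Some x) (Some y)" then show "rfst e = (\<lambda>_. 0) \<and> rsnd e \<in> E x y" by auto
next
  assume h: "rfst e = (\<lambda>_. 0) \<and> rsnd e \<in> E x y"
  have "e = rpair (\<lambda>_. 0) (rsnd e)" using h rpair_rfst_rsnd[of e] by simp
  then show "e \<in> E_plus_one (Some x) (Some y)" using h by auto
qed

lemma mem_E_plus_one_None: "e \<in> E_plus_one None None \<longleftrightarrow> rfst e = (\<lambda>_. 1)"
proof
  assume "e \<in> E_plus_one None None" then show "rfst e = (\<lambda>_. 1)" by auto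
next
  assume h: "rfst e = (\<lambda>_. 1)"
  have "e = rpair (\<lambda>_. 1) (rsnd e)" using h rpair_rfst_rsnd[of e] by simp
  then show "e \<in> E_plus_one None None" by auto
qed

lemma mem_E_graph:
  "c \<in> E_graph (n, b) (n', b') \<longleftrightarrow> rfst c = (\<lambda>_. n) \<and> n = n' \<and> rsnd c \<in> E_plus_one b b'"
  unfolding prod_eq_def mem_r_conj by auto

definition strict_fn :: "baire \<Rightarrow> baire" where "strict_fn c = rpair (rfst c) (rfst (rsnd c))"

lemma strict_fn_mem: assumes "c \<in> enum z" shows "strict_fn c \<in> E_graph z z"
proof -
  obtain n b where z: "z = (n, b)" by (cases z)
  show ?thesis
  proof (cases b)
    case None
    then obtain r w where "c = enum_real n 1 r w" using enum_NoneE assms z by blast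
    then show ?thesis unfolding z None strict_fn_def mem_E_graph mem_E_plus_one_None by simp
  next
    case (Some x)
    then obtain r w l where "c = enum_real n 0 r w" "r \<in> E x x" using enum_SomeE assms z by blast
    then show ?thesis unfolding z Some strict_fn_def mem_E_graph mem_E_plus_one_Some by simp
  qed
qed

definition tag :: "baire \<Rightarrow> nat" where "tag c = rfst (rsnd (rfst c)) 0"

lemma locally_const_on_tag: "locally_const_on D (\<lambda>c. tag c = 0)"
proof -
  have "baire_cont_on D (\<lambda>c. rfst (rsnd (rfst c)))" by (intro baire_cont_on_rfst baire_cont_on_rsnd baire_cont_on_id)
  then have "locally_const_on D (\<lambda>c. rfst (rsnd (rfst c)) 0)" by (rule locally_const_on_entry)
  then show ?thesis unfolding tag_def by (rule locally_const_on_compose)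
qed

text \<open>Extensionality: a realizer of enum (n, Some x) is transported along x = x' by
  rebuilding both the existence realizer of x' and the witness label_elem l = x' from
  symmetry and transitivity; realizers about the added point are kept.\<close>

definition ext_fn :: "baire \<Rightarrow> baire" where
  "ext_fn c =
     (if tag c = 0
      then rpair (rfst (rfst c))
        (rpair (rpair (\<lambda>_. 0) (trans_of (rpair (sym_of (rsnd (rsnd (rsnd c)))) (rsnd (rsnd (rsnd c))))))
          (trans_of (rpair (rsnd (rsnd (rfst c))) (rsnd (rsnd (rsnd c))))))
      else rfst c)"

lemma ext_fn_cases:
  assumes c: "c \<in> r_conj (enum z) (E_graph z z')" and t: "tag c = 0"
  shows "\<exists>n x x' l. z = (n, Some x) \<and> z' = (n, Some x') \<and> l \<in> labels \<and> n = Suc (to_nat l) \<and>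
     rsnd (rsnd (rsnd c)) \<in> E x x' \<and> rsnd (rsnd (rfst c)) \<in> E (label_elem l) x \<and> rfst (rfst c) = (\<lambda>_. n)"
proof -
  obtain n b where z: "z = (n, b)" by (cases z)
  obtain n' b' where z': "z' = (n', b')" by (cases z')
  have f: "rfst c \<in> enum (n, b)" and p: "rsnd c \<in> E_graph (n, b) (n', b')" using c z z' unfolding mem_r_conj by auto
  from p have nn: "n' = n" and e: "rsnd (rsnd c) \<in> E_plus_one b b'" unfolding mem_E_graph by auto
  show ?thesis
  proof (cases b)
    case None
    then obtain r w where "rfst c = enum_real n 1 r w" using enum_NoneE f by blast
    then have "tag c = 1" unfolding tag_def by simp
    then show ?thesis using t by simp
  next
    case (Some x)
    then obtain r w l where rw: "rfst c = enum_real n 0 r w" "r \<in> E x x" "l \<in> labels"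
       "n = Suc (to_nat l)" "w \<in> E (label_elem l) x"
      using enum_SomeE f by blast
    obtain x' where b': "b' = Some x'" using e Some by (cases b') auto
    have "rsnd (rsnd (rsnd c)) \<in> E x x'" using e Some b' mem_E_plus_one_Some by blast
    then show ?thesis using rw z z' nn Some b' by auto
  qed
qed

lemma ext_fn_mem: assumes c: "c \<in> r_conj (enum z) (E_graph z z')" shows "ext_fn c \<in> enum z'"
proof (cases "tag c = 0")
  case True
  obtain n x x' l where h: "z = (n, Some x)" "z' = (n, Some x')" "l \<in> labels" "n = Suc (to_nat l)"
     "rsnd (rsnd (rsnd c)) \<in> E x x'" "rsnd (rsnd (rfst c)) \<in> E (label_elem l) x" "rfst (rfst c) = (\<lambda>_. n)"
    using ext_fn_cases[OF c True] by blast
  let ?wz = "rsnd (rsnd (rsnd c))" and ?w = "rsnd (rsnd (rfst c))"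
  have s: "sym_of ?wz \<in> E x' x" by (rule K2_app_sym_code(2)[OF h(5)])
  have r': "trans_of (rpair (sym_of ?wz) ?wz) \<in> E x' x'" by (rule K2_app_trans_code(2)[OF s h(5)])
  have w': "trans_of (rpair ?w ?wz) \<in> E (label_elem l) x'" by (rule K2_app_trans_code(2)[OF h(6) h(5)])
  show ?thesis unfolding ext_fn_def using True h(2,3,4,7) enum_SomeI[OF r' h(3) w' h(4)] by simp
next
  case False
  obtain n b where z: "z = (n, b)" by (cases z)
  obtain n' b' where z': "z' = (n', b')" by (cases z')
  have f: "rfst c \<in> enum (n, b)" and p: "rsnd c \<in> E_graph (n, b) (n', b')" using c z z' unfolding mem_r_conj by auto
  from p have nn: "n' = n" and e: "rsnd (rsnd c) \<in> E_plus_one b b'" unfolding mem_E_graph by auto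
  have "b = None"
  proof (cases b)
    case (Some x)
    then obtain r w l where "rfst c = enum_real n 0 r w" using enum_SomeE f by blast
    then have "tag c = 0" unfolding tag_def by simp
    then show ?thesis using False by simp
  qed simp
  moreover then have "b' = None" using e by (cases b') auto
  ultimately show ?thesis unfolding ext_fn_def using False f z z' nn by simp
qed

text \<open>Uniqueness: two realizers of enum (n, Some x) and enum (n, Some x') witness
  label_elem l = x and label_elem l = x' for the same label l, since to_nat is injective.\<close>

definition uniq_fn :: "baire \<Rightarrow> baire" where
  "uniq_fn c =
     (if tag c = 0
      then rpair (\<lambda>_. 0) (trans_of (rpair (sym_of (rsnd (rsnd (rfst c)))) (rsnd (rsnd (rsnd c)))))
      else rpair (\<lambda>_. 1) (\<lambda>_. 0))"

lemma uniq_fn_cases: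
  assumes c: "c \<in> r_conj (enum (n, b)) (enum (n, b'))"
  shows "(tag c = 0 \<and> (\<exists>x x' l. b = Some x \<and> b' = Some x' \<and> rsnd (rsnd (rfst c)) \<in> E (label_elem l) x \<and> rsnd (rsnd (rsnd c)) \<in> E (label_elem l) x'))
      \<or> (tag c \<noteq> 0 \<and> b = None \<and> b' = None)"
proof -
  have f: "rfst c \<in> enum (n, b)" and f': "rsnd c \<in> enum (n, b')" using c unfolding mem_r_conj by auto
  show ?thesis
  proof (cases b)
    case None
    obtain r w where rw: "rfst c = enum_real n 1 r w" "\<forall>l\<in>labels. n \<noteq> Suc (to_nat l)"
      using enum_NoneE f None by blast
    have "b' = None"
    proof (cases b')
      case (Some x')
      then obtain l where "l \<in> labels" "n = Suc (to_nat l)" using enum_SomeE f' by blast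
      then show ?thesis using rw(2) by blast
    qed simp
    moreover have "tag c \<noteq> 0" using rw unfolding tag_def by simp
    ultimately show ?thesis using None by simp
  next
    case (Some x)
    obtain r w l where rw: "rfst c = enum_real n 0 r w" "l \<in> labels" "n = Suc (to_nat l)" "w \<in> E (label_elem l) x"
      using enum_SomeE f Some by blast
    obtain x' where b': "b' = Some x'"
    proof (cases b')
      case None
      then have "\<forall>l\<in>labels. n \<noteq> Suc (to_nat l)" using enum_NoneE f' by blast
      then show ?thesis using rw by blast
    qed
    obtain r' w' l' where rw': "rsnd c = enum_real n 0 r' w'" "l' \<in> labels" "n = Suc (to_nat l')" "w' \<in> E (label_elem l') x'"
      using enum_SomeE f' b' by blast
    have "l' = l" using rw(3) rw'(3) by simp
    then have "tag c = 0 \<and> rsnd (rsnd (rfst c)) \<in> E (label_elem l) x \<and> rsnd (rsnd (rsnd c)) \<in> E (label_elem l) x'"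
      using rw rw' unfolding tag_def by simp
    then show ?thesis using Some b' by blast
  qed
qed

lemma uniq_fn_mem: assumes c: "c \<in> r_conj (enum (n, b)) (enum (n, b'))" shows "uniq_fn c \<in> E_plus_one b b'"
  using uniq_fn_cases[OF c]
proof
  assume "tag c = 0 \<and> (\<exists>x x' l. b = Some x \<and> b' = Some x' \<and> rsnd (rsnd (rfst c)) \<in> E (label_elem l) x \<and> rsnd (rsnd (rsnd c)) \<in> E (label_elem l) x')"
  then obtain x x' l where h: "tag c = 0" "b = Some x" "b' = Some x'" "rsnd (rsnd (rfst c)) \<in> E (label_elem l) x" "rsnd (rsnd (rsnd c)) \<in> E (label_elem l) x'"
    by blast
  have "sym_of (rsnd (rsnd (rfst c))) \<in> E x (label_elem l)" by (rule K2_app_sym_code(2)[OF h(4)])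
  then have "trans_of (rpair (sym_of (rsnd (rsnd (rfst c)))) (rsnd (rsnd (rsnd c)))) \<in> E x x'" by (rule K2_app_trans_code(2)[OF _ h(5)])
  then show ?thesis unfolding uniq_fn_def using h mem_E_plus_one_Some by simp
next
  assume "tag c \<noteq> 0 \<and> b = None \<and> b' = None"
  then show ?thesis unfolding uniq_fn_def mem_E_plus_one_None by simp
qed

definition total_fn :: "nat \<Rightarrow> baire" where
  "total_fn n =
     (if \<exists>l\<in>labels. n = Suc (to_nat l)
      then (let r = label_rep (SOME l. l \<in> labels \<and> n = Suc (to_nat l)) in
            rpair (rpair (\<lambda>_. 0) r) (enum_real n 0 r r))
      else rpair (rpair (\<lambda>_. 1) (\<lambda>_. 0)) (enum_real n 1 (\<lambda>_. 0) (\<lambda>_. 0)))"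

lemma total_fn_mem: "total_fn n \<in> ex_in E_plus_one (\<lambda>b. enum (n, b))"
proof (cases "\<exists>l\<in>labels. n = Suc (to_nat l)")
  case True
  define l where "l = (SOME l. l \<in> labels \<and> n = Suc (to_nat l))"
  have ex: "\<exists>l. l \<in> labels \<and> n = Suc (to_nat l)" using True by blast
  have l: "l \<in> labels \<and> n = Suc (to_nat l)" unfolding l_def by (rule someI_ex[OF ex])
  have r: "label_rep l \<in> E (label_elem l) (label_elem l)" using label_rep_exist l by blast
  have t: "total_fn n = rpair (rpair (\<lambda>_. 0) (label_rep l)) (enum_real n 0 (label_rep l) (label_rep l))"
    unfolding total_fn_def l_def[symmetric] using True by (simp add: Let_def)
  have "rfst (total_fn n) \<in> E_plus_one (Some (label_elem l)) (Some (label_elem l))" using t r mem_E_plus_one_Some by simp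
  moreover have "rsnd (total_fn n) \<in> enum (n, Some (label_elem l))" using t enum_SomeI[OF r _ r] l by simp
  ultimately show ?thesis unfolding mem_ex_in by blast
next
  case False
  have "rfst (total_fn n) \<in> E_plus_one None None" unfolding total_fn_def using False mem_E_plus_one_None by simp
  moreover have "rsnd (total_fn n) \<in> enum (n, None)" unfolding total_fn_def using False enum_NoneI by simp
  ultimately show ?thesis unfolding mem_ex_in by blast
qed

definition surj_fn :: "baire \<Rightarrow> baire" where
  "surj_fn e =
     (if e 0 = 0
      then rpair (\<lambda>_. Suc (to_nat (label (rsnd e))))
        (rpair (\<lambda>_. Suc (to_nat (label (rsnd e)))) (rpair e (eq_witness (label_rep (label (rsnd e))) (rsnd e))))
      else rpair (\<lambda>_. 0) (rpair (\<lambda>_. 0) (rpair e e)))"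

lemma surj_fn_mem: assumes e: "e \<in> E_plus_one b b" shows "surj_fn e \<in> ex_in nno_eq (\<lambda>a. enum (a, b))"
proof (cases b)
  case None
  have le: "rfst e = (\<lambda>_. 1)" using e None mem_E_plus_one_None by blast
  then have "e 0 = 1" using rfst_0[of e] by simp
  then have s: "surj_fn e = rpair (\<lambda>_. 0) (rpair (\<lambda>_. 0) (rpair e e))" unfolding surj_fn_def by simp
  have "e = rpair (\<lambda>_. 1) (rsnd e)" using le rpair_rfst_rsnd[of e] by simp
  then have "rpair (\<lambda>_. 0) (rpair e e) \<in> enum (0, None)" using enum_NoneI[of 0 "rsnd e" e] by simp
  then show ?thesis unfolding mem_ex_in s None by auto
next
  case (Some x)
  have le: "rfst e = (\<lambda>_. 0)" and r: "rsnd e \<in> E x x" using e Some mem_E_plus_one_Some by auto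
  then have "e 0 = 0" using rfst_0[of e] by simp
  define l where "l = label (rsnd e)"
  have D: "rsnd e \<in> exist_realizers" using r unfolding exist_realizers_def by blast
  have l: "l \<in> labels" "agree (radius (label_rep l)) (rsnd e) (label_rep l)" using label_spec[OF D] unfolding l_def by auto
  have w: "eq_witness (label_rep l) (rsnd e) \<in> E (label_elem l) x" by (rule eq_witness_near(2)[OF label_rep_exist[OF l(1)] r l(2)])
  have s: "surj_fn e = rpair (\<lambda>_. Suc (to_nat l)) (rpair (\<lambda>_. Suc (to_nat l)) (rpair e (eq_witness (label_rep l) (rsnd e))))"
    unfolding surj_fn_def l_def using \<open>e 0 = 0\<close> by simp
  have "e = rpair (\<lambda>_. 0) (rsnd e)" using le rpair_rfst_rsnd[of e] by simp
  then have "rpair (\<lambda>_. Suc (to_nat l)) (rpair e (eq_witness (label_rep l) (rsnd e))) \<in> enum (Suc (to_nat l), Some x)"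
    using enum_SomeI[OF r l(1) w refl] by simp
  then show ?thesis unfolding mem_ex_in s Some by auto
qed

definition ext_dom :: "baire set" where "ext_dom = {c. \<exists>z z'. c \<in> r_conj (enum z) (E_graph z z')}"

definition uniq_dom :: "baire set" where "uniq_dom = {c. \<exists>n b b'. c \<in> r_conj (enum (n, b)) (enum (n, b'))}"

definition surj_dom :: "baire set" where "surj_dom = {e. \<exists>b. e \<in> E_plus_one b b}"

lemma ext_fn_defined:
  assumes "c \<in> ext_dom" "tag c = 0"
  shows "K2_app sym_code (rsnd (rsnd (rsnd c))) \<noteq> None \<and>
    K2_app trans_code (rpair (sym_of (rsnd (rsnd (rsnd c)))) (rsnd (rsnd (rsnd c)))) \<noteq> None \<and>
    K2_app trans_code (rpair (rsnd (rsnd (rfst c))) (rsnd (rsnd (rsnd c)))) \<noteq> None"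
proof -
  obtain z z' where c: "c \<in> r_conj (enum z) (E_graph z z')" using assms(1) unfolding ext_dom_def by blast
  obtain n x x' l where h: "rsnd (rsnd (rsnd c)) \<in> E x x'" "rsnd (rsnd (rfst c)) \<in> E (label_elem l) x"
    using ext_fn_cases[OF c assms(2)] by blast
  have s: "sym_of (rsnd (rsnd (rsnd c))) \<in> E x' x" by (rule K2_app_sym_code(2)[OF h(1)])
  show ?thesis using K2_app_sym_code[OF h(1)] K2_app_trans_code[OF s h(1)] K2_app_trans_code[OF h(2) h(1)] by simp
qed

lemma baire_cont_on_ext_fn: "baire_cont_on ext_dom ext_fn"
  unfolding ext_fn_def[abs_def]
proof (rule baire_cont_on_if[OF locally_const_on_tag])
  let ?D = "{c \<in> ext_dom. tag c = 0}"
  have "baire_cont_on ?D (\<lambda>c. sym_of (rsnd (rsnd (rsnd c))))" unfolding sym_of_def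
    by (intro baire_cont_on_K2_app_fixed baire_cont_on_rsnd baire_cont_on_id)
      (use ext_fn_defined in auto)
  then have "baire_cont_on ?D (\<lambda>c. trans_of (rpair (sym_of (rsnd (rsnd (rsnd c)))) (rsnd (rsnd (rsnd c)))))"
    unfolding trans_of_def
    by (intro baire_cont_on_K2_app_fixed baire_cont_on_rpair baire_cont_on_rsnd baire_cont_on_id)
      (use ext_fn_defined in auto)
  moreover have "baire_cont_on ?D (\<lambda>c. trans_of (rpair (rsnd (rsnd (rfst c))) (rsnd (rsnd (rsnd c)))))"
    unfolding trans_of_def
    by (intro baire_cont_on_K2_app_fixed baire_cont_on_rpair baire_cont_on_rsnd baire_cont_on_rfst baire_cont_on_id)
      (use ext_fn_defined in auto)
  ultimately show "baire_cont_on ?D (\<lambda>c. rpair (rfst (rfst c))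
      (rpair (rpair (\<lambda>_. 0) (trans_of (rpair (sym_of (rsnd (rsnd (rsnd c)))) (rsnd (rsnd (rsnd c))))))
        (trans_of (rpair (rsnd (rsnd (rfst c))) (rsnd (rsnd (rsnd c)))))))"
    by (intro baire_cont_on_rpair baire_cont_on_rfst baire_cont_on_id baire_cont_on_const)
qed (intro baire_cont_on_rfst baire_cont_on_id)

lemma uniq_fn_defined:
  assumes "c \<in> uniq_dom" "tag c = 0"
  shows "K2_app sym_code (rsnd (rsnd (rfst c))) \<noteq> None \<and>
    K2_app trans_code (rpair (sym_of (rsnd (rsnd (rfst c)))) (rsnd (rsnd (rsnd c)))) \<noteq> None"
proof -
  obtain n b b' where c: "c \<in> r_conj (enum (n, b)) (enum (n, b'))" using assms(1) unfolding uniq_dom_def by blast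
  obtain x x' l where h: "rsnd (rsnd (rfst c)) \<in> E (label_elem l) x" "rsnd (rsnd (rsnd c)) \<in> E (label_elem l) x'"
    using uniq_fn_cases[OF c] assms(2) by blast
  have s: "sym_of (rsnd (rsnd (rfst c))) \<in> E x (label_elem l)" by (rule K2_app_sym_code(2)[OF h(1)])
  show ?thesis using K2_app_sym_code[OF h(1)] K2_app_trans_code[OF s h(2)] by simp
qed

lemma baire_cont_on_uniq_fn: "baire_cont_on uniq_dom uniq_fn"
  unfolding uniq_fn_def[abs_def]
proof (rule baire_cont_on_if[OF locally_const_on_tag])
  let ?D = "{c \<in> uniq_dom. tag c = 0}"
  have "baire_cont_on ?D (\<lambda>c. sym_of (rsnd (rsnd (rfst c))))" unfolding sym_of_def
    by (intro baire_cont_on_K2_app_fixed baire_cont_on_rsnd baire_cont_on_rfst baire_cont_on_id)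
      (use uniq_fn_defined in auto)
  then have "baire_cont_on ?D (\<lambda>c. trans_of (rpair (sym_of (rsnd (rsnd (rfst c)))) (rsnd (rsnd (rsnd c)))))"
    unfolding trans_of_def
    by (intro baire_cont_on_K2_app_fixed baire_cont_on_rpair baire_cont_on_rsnd baire_cont_on_id)
      (use uniq_fn_defined in auto)
  then show "baire_cont_on ?D (\<lambda>c. rpair (\<lambda>_. 0) (trans_of (rpair (sym_of (rsnd (rsnd (rfst c)))) (rsnd (rsnd (rsnd c))))))"
    by (intro baire_cont_on_rpair baire_cont_on_const)
qed simp

lemma surj_dom_exist_realizers: "e \<in> surj_dom \<Longrightarrow> e 0 = 0 \<Longrightarrow> rsnd e \<in> exist_realizers"
proof -
  assume e: "e \<in> surj_dom" "e 0 = 0"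
  then obtain b where b: "e \<in> E_plus_one b b" unfolding surj_dom_def by blast
  show ?thesis
  proof (cases b)
    case None
    then have "rfst e = (\<lambda>_. 1)" using b mem_E_plus_one_None by blast
    then have "e 0 = 1" using rfst_0[of e] by simp
    then show ?thesis using e by simp
  next
    case (Some x)
    then have "rsnd e \<in> E x x" using b mem_E_plus_one_Some by blast
    then show ?thesis unfolding exist_realizers_def by blast
  qed
qed

lemma baire_cont_on_surj_fn: "baire_cont_on surj_dom surj_fn"
  unfolding surj_fn_def[abs_def]
proof (rule baire_cont_on_if[OF locally_const_on_head])
  let ?D = "{e \<in> surj_dom. e 0 = 0}"
  let ?T = "\<lambda>l e. rpair (\<lambda>_. Suc (to_nat l)) (rpair (\<lambda>_. Suc (to_nat l)) (rpair e (eq_witness (label_rep l) (rsnd e))))"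
  have label_lc: "locally_const_on ?D (\<lambda>e. label (rsnd e))"
    by (rule locally_const_on_compose_cont[OF locally_const_on_label baire_cont_on_rsnd[OF baire_cont_on_id]])
      (use surj_dom_exist_realizers in blast)
  show "baire_cont_on ?D (\<lambda>e. ?T (label (rsnd e)) e)"
  proof (rule baire_cont_on_local)
    fix e assume e: "e \<in> ?D"
    obtain k where k: "\<forall>e'\<in>?D. agree k e' e \<longrightarrow> label (rsnd e') = label (rsnd e)"
      using label_lc e unfolding locally_const_on_def by blast
    define l where "l = label (rsnd e)"
    let ?N = "{e' \<in> ?D. agree k e' e}"
    have "label_rep l \<in> exist_realizers"
      using label_rep_spec label_spec(1)[OF surj_dom_exist_realizers] e unfolding l_def by blast
    moreover have "rsnd e' \<in> {s \<in> exist_realizers. agree (radius (label_rep l)) s (label_rep l)}" if "e' \<in> ?N" for e'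
    proof -
      have "rsnd e' \<in> exist_realizers" using that surj_dom_exist_realizers by blast
      moreover have "label (rsnd e') = l" using that k l_def by blast
      ultimately show ?thesis using label_spec(2) by fastforce
    qed
    ultimately have "baire_cont_on ?N (\<lambda>e'. eq_witness (label_rep l) (rsnd e'))"
      by (intro baire_cont_on_compose[OF baire_cont_on_eq_witness baire_cont_on_rsnd[OF baire_cont_on_id]])
    then have "baire_cont_on ?N (?T l)"
      by (intro baire_cont_on_rpair baire_cont_on_const baire_cont_on_id)
    moreover have "?T l e' = ?T (label (rsnd e')) e'" if "e' \<in> ?N" for e'
      using that k l_def by simp
    ultimately have "baire_cont_on ?N (\<lambda>e. ?T (label (rsnd e)) e)"
      by (rule baire_cont_on_cong[rotated])
    then show "\<exists>k. baire_cont_on {e' \<in> ?D. agree k e' e} (\<lambda>e. ?T (label (rsnd e)) e)" by blast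
  qed
qed (intro baire_cont_on_rpair baire_cont_on_const baire_cont_on_id)

lemma strict_pred_enum: "K2_fun UNIV strict_fn \<in> strict_pred E_graph enum"
proof -
  have "baire_cont_on UNIV strict_fn" unfolding strict_fn_def[abs_def]
    by (intro baire_cont_on_rpair baire_cont_on_rfst baire_cont_on_rsnd baire_cont_on_id)
  then show ?thesis unfolding strict_pred_def r_all_def
    using K2_fun_mem_r_imp strict_fn_mem by blast
qed

lemma ext_pred_enum: "K2_fun ext_dom ext_fn \<in> ext_pred E_graph enum"
  unfolding ext_pred_def r_all_def
  by (intro INT_I K2_fun_mem_r_imp[OF baire_cont_on_ext_fn] ext_fn_mem) (auto simp: ext_dom_def)

lemma pow_eq_enum:
  "rpair (rpair (K2_fun UNIV strict_fn) (K2_fun ext_dom ext_fn)) (rpair K2_id K2_id) \<in> pow_eq E_graph enum enum"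
  unfolding pow_eq_def mem_r_conj r_all_def using strict_pred_enum ext_pred_enum K2_id_mem_r_iff by simp

lemma is_fun_rel_enum:
  "rpair (K2_fun (range (\<lambda>n. \<lambda>_. n)) (\<lambda>a. total_fn (a 0))) (K2_const (K2_const (K2_const (K2_fun uniq_dom uniq_fn))))
     \<in> is_fun_rel nno_eq E_plus_one enum"
proof -
  have "K2_fun (range (\<lambda>n. \<lambda>_. n)) (\<lambda>a. total_fn (a 0)) \<in> all_in nno_eq (\<lambda>n. ex_in E_plus_one (\<lambda>b. enum (n, b)))"
    by (intro all_inI K2_fun_mem_r_imp[OF baire_cont_on_const_seqs]) (auto simp: total_fn_mem)
  moreover have "K2_fun uniq_dom uniq_fn \<in> r_imp (r_conj (enum (n, b)) (enum (n, b'))) (E_plus_one b b')" for n b b'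
    by (intro K2_fun_mem_r_imp[OF baire_cont_on_uniq_fn] uniq_fn_mem) (auto simp: uniq_dom_def)
  ultimately show ?thesis
    unfolding is_fun_rel_def mem_r_conj by (simp add: K2_const_mem_all_in)
qed

lemma is_surj_rel_enum: "K2_fun surj_dom surj_fn \<in> is_surj_rel nno_eq E_plus_one enum"
  unfolding is_surj_rel_def
  by (intro all_inI K2_fun_mem_r_imp[OF baire_cont_on_surj_fn] surj_fn_mem) (auto simp: surj_dom_def)

lemma countable_obj_nonempty: "countable_obj E \<noteq> {}"
proof -
  let ?\<Phi> = "\<lambda>F. r_conj (is_fun_rel nno_eq E_plus_one F) (is_surj_rel nno_eq E_plus_one F)"
  have "?\<Phi> enum \<noteq> {}" using r_conjI[OF is_fun_rel_enum is_surj_rel_enum] by blast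
  then show ?thesis
    unfolding countable_obj_def using ex_inI[of _ "pow_eq E_graph" enum _ ?\<Phi>, OF pow_eq_enum] by blast
qed

end

theorem theorem3p4:
  fixes E :: "'a \<Rightarrow> 'a \<Rightarrow> (nat \<Rightarrow> nat) set"
  assumes "is_object E"
  shows "valid (r_imp (eq_intrinsically_open E) (countable_obj E))"
proof (cases "eq_intrinsically_open E = {}")
  case True
  then have "(\<lambda>_. 0) \<in> r_imp (eq_intrinsically_open E) (countable_obj E)" unfolding mem_r_imp by simp
  then show ?thesis unfolding valid_def by blast
next
  case False
  then obtain r_open where "r_open \<in> eq_intrinsically_open E" by blast
  with assms interpret open_equality E r_open by unfold_locales
  obtain q where "q \<in> countable_obj E" using countable_obj_nonempty by blast
  then have "K2_const q \<in> r_imp (eq_intrinsically_open E) (countable_obj E)" unfolding mem_r_imp by simp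
  then show ?thesis unfolding valid_def by blast
qed

end
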